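(* Let $V\subset\mathbb{R}^d$ be a finite non-degenerate antichain and $k\ge 0$. A generated point $p\in S_V$ is a characteristic point of rank $k$ if and only if there is a partition $D_p=P_1\cup\dots\cup P_{k+1}$ into nonempty parts such that a subset $G\subseteq D_p$ is a minimal generating set for $p$ if and only if $|G\cap P_i|=1$ for all $i=1,\dots,k+1$. Moreover, in this case two minima $u,w\in D_p$ lie in the same part iff $T_p(u)=T_p(w)$.
   Context: For $x,y\in\mathbb{R}^d$, $x\le y$ (dominance order) means $x_i\le y_i$ for all $i$; $y\rhd x$ means $y_i>x_i$ for all $i$; $y\rhd_i x$ means $y_i=x_i$ and $y_j>x_j$ for all $j\neq i$. The join is the componentwise maximum. $V\subset\mathbb{R}^d$ is a finite antichain in the dominance order (elements are called minima). The orthogonal surface $S_V$ is the topological boundary of $\langle V\rangle=\{x: x\ge v\text{ for some }v\in V\}$; equivalently $p\in S_V$ iff there is $v\in V$ with $v\le p$ and no $w\in V$ with $p\rhd w$. For $p\in S_V$, $D_p=\{v\in V:v\le p\}$ and for $v\in D_p$, $T_p(v)=\{i: p_i=v_i\}$. A generated point is a point $p\in S_V$ equal to $\bigvee G$ for some nonempty $G\subseteq V$; such $G$ is a generating set for $p$, minimal if $\bigvee(G\setminus\{v\})\neq p$ for every $v\in G$. Flats: $U_i(v)=\{p\in S_V: p\rhd_i v\}$; for $v,w\in V$ put $v\sim_i w$ iff $U_i(v)\cap U_i(w)\neq\emptyset$, and let $\sim_i^c$ be the reflexive–transitive closure; the $i$-flat of $v$ is $F_i(v)=\overline{\bigcup_{w\sim_i^c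 v}U_i(w)}$, and an $i$-flat is any set of this form. A characteristic point is a point of $S_V$ that lies in some $i$-flat for every $i\in\{1,\dots,d\}$. $V$ is degenerate if there exist a characteristic point $p$, minima $x,u,v\in D_p$ and coordinates $i\neq j$ with $u_i<v_i=x_i=p_i$ and $v_j<u_j=x_j=p_j$; otherwise non-degenerate. For non-degenerate $V$ all minimal generating sets of a characteristic point have the same cardinality, and the rank of a characteristic point is this cardinality minus one. *)

theory Defs
  imports "HOL-Analysis.Analysis"
begin

definition dom_le :: "real^'d \<Rightarrow> real^'d \<Rightarrow> bool" where
  "dom_le x y \<longleftrightarrow> (\<forall>i. x$i \<le> y$i)"

definition sdom :: "real^'d \<Rightarrow> real^'d \<Rightarrow> bool" where
  "sdom y x \<longleftrightarrow> (\<forall>i. y$i > x$i)"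

definition sdom_i :: "'d \<Rightarrow> real^'d \<Rightarrow> real^'d \<Rightarrow> bool" where
  "sdom_i i y x \<longleftrightarrow> y$i = x$i \<and> (\<forall>j. j \<noteq> i \<longrightarrow> y$j > x$j)"

definition join :: "(real^'d) set \<Rightarrow> real^'d" where
  "join G = (\<chi> i. Max ((\<lambda>v. v$i) ` G))"

definition antichain :: "(real^'d) set \<Rightarrow> bool" where
  "antichain V \<longleftrightarrow> finite V \<and> (\<forall>v\<in>V. \<forall>w\<in>V. dom_le v w \<longrightarrow> v = w)"

definition surface :: "(real^'d) set \<Rightarrow> (real^'d) set" where
  "surface V = {p. (\<exists>v\<in>V. dom_le v p) \<and> \<not> (\<exists>w\<in>V. sdom p w)}"

definition Dset :: "(real^'d) set \<Rightarrow> real^'d \<Rightarrow> (real^'d) set" where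
  "Dset V p = {v\<in>V. dom_le v p}"

definition Tset :: "real^'d \<Rightarrow> real^'d \<Rightarrow> 'd set" where
  "Tset p v = {i. p$i = v$i}"

definition gen_set :: "(real^'d) set \<Rightarrow> real^'d \<Rightarrow> (real^'d) set \<Rightarrow> bool" where
  "gen_set V p G \<longleftrightarrow> G \<noteq> {} \<and> G \<subseteq> V \<and> join G = p"

text \<open>Minimal generating set; removing the only element leaves the empty set, whose join is
  not considered to be p.\<close>
definition min_gen_set :: "(real^'d) set \<Rightarrow> real^'d \<Rightarrow> (real^'d) set \<Rightarrow> bool" where
  "min_gen_set V p G \<longleftrightarrow> gen_set V p G \<and>
     (\<forall>v\<in>G. G - {v} = {} \<or> join (G - {v}) \<noteq> p)"

definition generated_point :: "(real^'d) set \<Rightarrow> real^'d \<Rightarrow> bool" where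
  "generated_point V p \<longleftrightarrow> p \<in> surface V \<and> (\<exists>G. gen_set V p G)"

definition Uflat :: "(real^'d) set \<Rightarrow> 'd \<Rightarrow> real^'d \<Rightarrow> (real^'d) set" where
  "Uflat V i v = {p \<in> surface V. sdom_i i p v}"

definition sim_i :: "(real^'d) set \<Rightarrow> 'd \<Rightarrow> real^'d \<Rightarrow> real^'d \<Rightarrow> bool" where
  "sim_i V i v w \<longleftrightarrow> v \<in> V \<and> w \<in> V \<and> Uflat V i v \<inter> Uflat V i w \<noteq> {}"

definition flat :: "(real^'d) set \<Rightarrow> 'd \<Rightarrow> real^'d \<Rightarrow> (real^'d) set" where
  "flat V i v = closure (\<Union> {Uflat V i w | w. (sim_i V i)\<^sup>*\<^sup>* v w})"

definition characteristic :: "(real^'d) set \<Rightarrow> real^'d \<Rightarrow> bool" where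
  "characteristic V p \<longleftrightarrow> p \<in> surface V \<and> (\<forall>i. \<exists>v\<in>V. p \<in> flat V i v)"

definition degenerate :: "(real^'d) set \<Rightarrow> bool" where
  "degenerate V \<longleftrightarrow> (\<exists>p x u v i j. characteristic V p \<and>
      x \<in> Dset V p \<and> u \<in> Dset V p \<and> v \<in> Dset V p \<and> i \<noteq> j \<and>
      u$i < v$i \<and> v$i = x$i \<and> x$i = p$i \<and>
      v$j < u$j \<and> u$j = x$j \<and> x$j = p$j)"

definition rank :: "(real^'d) set \<Rightarrow> real^'d \<Rightarrow> nat" where
  "rank V p = card (SOME G. min_gen_set V p G) - 1"

end

(*
  Write T = Tset p on the minima D = Dset V p.  A set G \<subseteq> D generates p iff the sets T g,
  g \<in> G, cover all coordinates, so minimal generating sets are minimal covers.  Perturbing p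
  shows that p is characteristic iff every coordinate i is anchored: some v \<in> D has i \<in> T v,
  and so does every w \<in> D with T w \<subseteq> T v.

  If p is characteristic, non-degeneracy forces the sets T x \<inter> T u, T x \<inter> T v to be
  comparable, which gives every minimum a private coordinate; hence the minimal covers are exactly
  the transversals of the partition of D into classes of equal T.  Conversely, if the minimal covers
  are the transversals of some partition, a swapping argument anchors every coordinate, so p is
  characteristic; and since a partition is determined by its transversals, it is the partition by T.
*)
theory Submission
  imports Defs
begin

section \<open>Transversals of partitions\<close>

definition transversal :: "'a set set \<Rightarrow> 'a set \<Rightarrow> bool" where
  "transversal \<P> G \<longleftrightarrow> (\<forall>B\<in>\<P>. card (G \<inter> B) = 1)"

definition fibres :: "'a set \<Rightarrow> ('a \<Rightarrow> 'b) \<Rightarrow> 'a set set" where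
  "fibres D f = (\<lambda>a. {x\<in>D. f x = f a}) ` D"

lemma transversal_iff_singleton: "transversal \<P> G \<longleftrightarrow> (\<forall>B\<in>\<P>. \<exists>x. G \<inter> B = {x})"
  by (simp add: transversal_def card_1_singleton_iff)

lemma transversal_swap:
  assumes "disjoint \<P>" "transversal \<P> G" "B \<in> \<P>" "G \<inter> B = {g}" "w \<in> B"
  shows "transversal \<P> (insert w (G - {g}))"
  unfolding transversal_iff_singleton
proof
  fix C assume C: "C \<in> \<P>"
  show "\<exists>x. insert w (G - {g}) \<inter> C = {x}"
  proof (cases "C = B")
    case False
    then have "C \<inter> B = {}" using assms(1,3) C by (auto dest: disjointD)
    then have "insert w (G - {g}) \<inter> C = G \<inter> C" using assms(4,5) by auto
    then show ?thesis using assms(2) C by (simp add: transversal_iff_singleton)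
  qed (use assms(4,5) in auto)
qed

lemma transversal_exists:
  assumes "partition_on D \<P>"
  obtains G where "G \<subseteq> D" "transversal \<P> G"
proof
  define G where "G = (\<lambda>B. SOME x. x \<in> B) ` \<P>"
  have some_in: "(SOME x. x \<in> B) \<in> B" if "B \<in> \<P>" for B
    using partition_onD3[OF assms] that by (metis ex_in_conv someI_ex)
  show "G \<subseteq> D" using some_in partition_onD1[OF assms] by (auto simp: G_def)
  have "G \<inter> B = {SOME x. x \<in> B}" if "B \<in> \<P>" for B
    using some_in that partition_onD2[OF assms] by (auto simp: G_def dest: disjointD)
  then show "transversal \<P> G" by (simp add: transversal_def)
qed

lemma transversal_through_pair:
  assumes P: "partition_on D \<P>" and "B \<in> \<P>" "C \<in> \<P>" "B \<noteq> C" "u \<in> B" "w \<in> C"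
  obtains G where "G \<subseteq> D" "transversal \<P> G" "u \<in> G" "w \<in> G"
proof -
  have disj: "disjoint \<P>" using partition_onD2[OF P] .
  have sub: "B \<subseteq> D" "C \<subseteq> D" using P assms(2,3) by (auto dest: partition_onD1)
  obtain G0 where G0: "G0 \<subseteq> D" "transversal \<P> G0" using transversal_exists[OF P] .
  obtain b where b: "G0 \<inter> B = {b}" using G0(2) assms(2) by (auto simp: transversal_iff_singleton)
  define G1 where "G1 = insert u (G0 - {b})"
  have G1: "transversal \<P> G1" unfolding G1_def by (rule transversal_swap[OF disj G0(2) assms(2) b assms(5)])
  obtain c where c: "G1 \<inter> C = {c}" using G1 assms(3) by (auto simp: transversal_iff_singleton)
  have "u \<notin> C" using disj assms(2-5) by (auto dest: disjointD)
  then have "u \<noteq> c" using c by auto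
  show thesis
  proof
    show "insert w (G1 - {c}) \<subseteq> D" using G0(1) sub assms(5,6) by (auto simp: G1_def)
    show "transversal \<P> (insert w (G1 - {c}))" by (rule transversal_swap[OF disj G1 assms(3) c assms(6)])
    show "u \<in> insert w (G1 - {c})" using \<open>u \<noteq> c\<close> by (simp add: G1_def)
  qed simp
qed

lemma card_transversal:
  assumes "finite D" "partition_on D \<P>" "G \<subseteq> D" "transversal \<P> G"
  shows "card G = card \<P>"
proof -
  have fin: "finite \<P>" using finite_elements[OF assms(1,2)] .
  have "G = (\<Union>B\<in>\<P>. G \<inter> B)" using assms(3) partition_onD1[OF assms(2)] by auto
  also have "card \<dots> = (\<Sum>B\<in>\<P>. card (G \<inter> B))"
    using fin assms(1,3) partition_onD2[OF assms(2)]
    by (intro card_UN_disjoint) (auto dest: disjointD intro: finite_subset)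
  also have "\<dots> = card \<P>" using assms(4) by (simp add: transversal_def)
  finally show ?thesis .
qed

lemma block_subset_if_same_transversals:
  assumes P: "partition_on D \<P>" and Q: "partition_on D \<Q>"
    and same: "\<forall>G\<subseteq>D. transversal \<P> G \<longleftrightarrow> transversal \<Q> G"
    and B: "B \<in> \<P>" and C: "C \<in> \<Q>" and u: "u \<in> B" "u \<in> C"
  shows "B \<subseteq> C"
proof
  fix w assume w: "w \<in> B"
  show "w \<in> C"
  proof (rule ccontr)
    assume "w \<notin> C"
    have "w \<in> D" using P B w by (auto dest: partition_onD1)
    then obtain C' where C': "C' \<in> \<Q>" "w \<in> C'" using partition_onD1[OF Q] by auto
    then have "C' \<noteq> C" using \<open>w \<notin> C\<close> by auto
    then obtain G where G: "G \<subseteq> D" "transversal \<Q> G" "u \<in> G" "w \<in> G"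
      using transversal_through_pair[OF Q C C'(1) _ u(2) C'(2)] by metis
    then have "transversal \<P> G" using same by blast
    then obtain x where "G \<inter> B = {x}" using B by (auto simp: transversal_iff_singleton)
    then have "u = w" using G(3,4) u(1) w by (metis IntI singletonD)
    then show False using \<open>w \<notin> C\<close> u(2) by simp
  qed
qed

lemma partitions_eq_if_same_transversals:
  assumes P: "partition_on D \<P>" and Q: "partition_on D \<Q>"
    and same: "\<forall>G\<subseteq>D. transversal \<P> G \<longleftrightarrow> transversal \<Q> G"
  shows "\<P> = \<Q>"
proof -
  have *: "\<P> \<subseteq> \<Q>" if P: "partition_on D \<P>" and Q: "partition_on D \<Q>"
    and same: "\<forall>G\<subseteq>D. transversal \<P> G \<longleftrightarrow> transversal \<Q> G" for \<P> \<Q>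
  proof
    fix B assume B: "B \<in> \<P>"
    then obtain u where u: "u \<in> B" using partition_onD3[OF P] by (metis ex_in_conv)
    then have "u \<in> D" using P B by (auto dest: partition_onD1)
    then obtain C where C: "C \<in> \<Q>" "u \<in> C" using partition_onD1[OF Q] by auto
    have "B \<subseteq> C" by (rule block_subset_if_same_transversals[OF P Q same B C(1) u C(2)])
    moreover have "C \<subseteq> B" using same
      by (intro block_subset_if_same_transversals[OF Q P _ C(1) B C(2) u]) auto
    ultimately show "B \<in> \<Q>" using C by auto
  qed
  show ?thesis using *[OF P Q same] *[OF Q P] same by auto
qed

lemma partition_on_fibres: "partition_on D (fibres D f)"
  by (rule partition_onI) (auto simp: fibres_def disjnt_def)

lemma fibre_in_fibres: "a \<in> D \<Longrightarrow> {x\<in>D. f x = f a} \<in> fibres D f"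
  unfolding fibres_def by (rule imageI)

lemma same_fibre_iff:
  assumes "u \<in> D" "w \<in> D"
  shows "(\<exists>B\<in>fibres D f. u \<in> B \<and> w \<in> B) \<longleftrightarrow> f u = f w"
  using assms by (auto simp: fibres_def)

lemma indexed_partition_iff:
  "(\<forall>i\<le>k. P i \<noteq> {}) \<and> (\<forall>i\<le>k. \<forall>j\<le>k. i \<noteq> j \<longrightarrow> P i \<inter> P j = {}) \<and> (\<Union>i\<le>k. P i) = D \<longleftrightarrow>
    partition_on D (P ` {..k}) \<and> inj_on P {..k}"
  (is "?indexed \<longleftrightarrow> _")
proof
  assume ?indexed
  then have "inj_on P {..k}" by (intro inj_onI) (metis Int_absorb atMost_iff)
  moreover have "disjnt (P i) (P j)" if "i \<le> k" "j \<le> k" "P i \<noteq> P j" for i j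
    using \<open>?indexed\<close> that by (cases "i = j") (simp_all add: disjnt_def)
  ultimately show "partition_on D (P ` {..k}) \<and> inj_on P {..k}"
    using \<open>?indexed\<close> by (auto intro!: partition_onI)
next
  assume "partition_on D (P ` {..k}) \<and> inj_on P {..k}"
  then have part: "partition_on D (P ` {..k})" and inj: "inj_on P {..k}" by blast+
  have "P i \<inter> P j = {}" if "i \<le> k" "j \<le> k" "i \<noteq> j" for i j
  proof -
    have "P i \<noteq> P j" using inj that by (simp add: inj_on_eq_iff)
    moreover have "P i \<in> P ` {..k}" "P j \<in> P ` {..k}" using that by simp_all
    ultimately show ?thesis using disjointD[OF partition_onD2[OF part]] by blast
  qed
  moreover have "P i \<noteq> {}" if "i \<le> k" for i using partition_onD3[OF part] that by auto
  moreover have "(\<Union>i\<le>k. P i) = D" using partition_onD1[OF part] by simp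
  ultimately show ?indexed by blast
qed

lemma enumerate_finite_set:
  assumes "finite A" "card A = Suc k"
  obtains P where "P ` {..k} = A" "inj_on P {..k}"
proof -
  obtain P where "bij_betw P {0..<card A} A" using ex_bij_betw_nat_finite[OF assms(1)] by blast
  then have "P ` {..k} = A" "inj_on P {..k}"
    using assms(2) by (simp_all add: bij_betw_def atLeast0LessThan lessThan_Suc_atMost)
  then show thesis by (rule that)
qed

section \<open>Minimal covers\<close>

definition covers :: "('a \<Rightarrow> 'b set) \<Rightarrow> 'a set \<Rightarrow> bool" where
  "covers T G \<longleftrightarrow> (\<forall>i. \<exists>g\<in>G. i \<in> T g)"

definition minimal_cover :: "('a \<Rightarrow> 'b set) \<Rightarrow> 'a set \<Rightarrow> bool" where
  "minimal_cover T G \<longleftrightarrow> covers T G \<and> (\<forall>v\<in>G. \<not> covers T (G - {v}))"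

lemma minimal_cover_subsumed:
  assumes "minimal_cover T G" "v \<in> G" "w \<in> G" "T w \<subseteq> T v"
  shows "w = v"
proof (rule ccontr)
  assume "w \<noteq> v"
  then have "covers T (G - {w})"
    using assms unfolding minimal_cover_def covers_def by (metis Diff_iff singletonD subsetD)
  then show False using assms(1,3) by (simp add: minimal_cover_def)
qed

(* Take a transversal G with fewest elements whose T-set contains i.  Swapping a minimum w with
   T w \<subseteq> T g and i \<notin> T w into G either makes g redundant or decreases that number. *)
lemma anchored_if_minimal_covers_transversal:
  assumes fin: "finite D" and P: "partition_on D \<P>"
    and mc: "\<forall>G\<subseteq>D. minimal_cover T G \<longleftrightarrow> transversal \<P> G"
  shows "\<exists>v\<in>D. i \<in> T v \<and> (\<forall>w\<in>D. T w \<subseteq> T v \<longrightarrow> i \<in> T w)"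
proof (rule ccontr)
  assume not_anchored: "\<not> ?thesis"
  define hits where "hits G = card {g\<in>G. i \<in> T g}" for G
  obtain G0 where "G0 \<subseteq> D" "transversal \<P> G0" using transversal_exists[OF P] .
  then obtain G where G: "G \<subseteq> D" "transversal \<P> G"
    and least: "\<And>H. H \<subseteq> D \<Longrightarrow> transversal \<P> H \<Longrightarrow> hits G \<le> hits H"
    using ex_has_least_nat[of "\<lambda>G. G \<subseteq> D \<and> transversal \<P> G" G0 hits] by blast
  then have "minimal_cover T G" using mc by blast
  then obtain g where g: "g \<in> G" "i \<in> T g" unfolding minimal_cover_def covers_def by blast
  then obtain w where w: "w \<in> D" "T w \<subseteq> T g" "i \<notin> T w" using not_anchored G(1) by blast
  then obtain B where B: "B \<in> \<P>" "w \<in> B" using partition_onD1[OF P] by auto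
  then obtain g' where g': "G \<inter> B = {g'}" using G(2) by (auto simp: transversal_iff_singleton)
  define G' where "G' = insert w (G - {g'})"
  have G': "G' \<subseteq> D" "transversal \<P> G'"
    using G(1) w(1) transversal_swap[OF partition_onD2[OF P] G(2) B(1) g' B(2)] by (auto simp: G'_def)
  show False
  proof (cases "g' = g")
    case True
    have fin_G: "finite G" using G(1) fin by (rule finite_subset)
    have "hits G' \<le> card ({x\<in>G. i \<in> T x} - {g})"
      unfolding hits_def using fin_G True w(3) by (intro card_mono) (auto simp: G'_def)
    also have "\<dots> < hits G"
      unfolding hits_def using fin_G g by (intro card_Diff1_less) auto
    finally have "hits G' < hits G" .
    then show False using least[OF G'] by simp
  next
    case False
    then have "minimal_cover T G'" "g \<in> G'" "w \<in> G'" using mc G' g(1) by (auto simp: G'_def)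
    then have "w = g" using w(2) by (rule minimal_cover_subsumed)
    then show False using w(3) g(2) by simp
  qed
qed

(* Otherwise T a is the union of the chain of sets T w \<inter> T a with T w \<noteq> T a, so T a \<subset> T m
   for some m, and a coordinate of T m - T a has no anchor. *)
lemma private_coordinate:
  assumes fin: "finite D" and nonempty: "\<And>w. w \<in> D \<Longrightarrow> T w \<noteq> {}"
    and anchored: "\<And>i. \<exists>v\<in>D. i \<in> T v \<and> (\<forall>w\<in>D. T w \<subseteq> T v \<longrightarrow> i \<in> T w)"
    and chain: "\<And>x u v. x \<in> D \<Longrightarrow> u \<in> D \<Longrightarrow> v \<in> D \<Longrightarrow> T x \<inter> T v \<subseteq> T u \<or> T x \<inter> T u \<subseteq> T v"
    and a: "a \<in> D"
  shows "\<exists>i\<in>T a. \<forall>w\<in>D. i \<in> T w \<longrightarrow> T w = T a"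
proof (rule ccontr)
  define S where "S = (\<lambda>w. T w \<inter> T a) ` {w\<in>D. T w \<noteq> T a}"
  assume "\<not> ?thesis"
  then have "\<exists>w\<in>D. i \<in> T w \<and> T w \<noteq> T a" if "i \<in> T a" for i
    using that by blast
  then have "T a \<subseteq> \<Union>S" unfolding S_def by blast
  then have "\<Union>S = T a" by (auto simp: S_def)
  moreover have "subset.chain UNIV S"
    unfolding subset_chain_def S_def using chain[OF a] by blast
  moreover have "finite S" using fin by (simp add: S_def)
  moreover have "S \<noteq> {}" using nonempty[OF a] \<open>\<Union>S = T a\<close> by auto
  ultimately have "T a \<in> S" using Union_in_chain[of S UNIV] by simp
  then obtain m where m: "m \<in> D" "T a \<subset> T m" by (auto simp: S_def)
  then obtain i where i: "i \<in> T m" "i \<notin> T a" by blast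
  obtain v where v: "v \<in> D" "i \<in> T v" "\<forall>w\<in>D. T w \<subseteq> T v \<longrightarrow> i \<in> T w" using anchored by blast
  then have "\<not> T a \<subseteq> T v" using a i(2) by blast
  then show False using chain[OF m(1) a v(1)] i v(2) m(2) by blast
qed

lemma covers_iff_meets_all_fibres:
  assumes "covers T D" "\<forall>a\<in>D. \<exists>i\<in>T a. \<forall>w\<in>D. i \<in> T w \<longrightarrow> T w = T a" "H \<subseteq> D"
  shows "covers T H \<longleftrightarrow> (\<forall>a\<in>D. \<exists>h\<in>H. T h = T a)"
proof
  assume H: "covers T H"
  show "\<forall>a\<in>D. \<exists>h\<in>H. T h = T a"
  proof
    fix a assume "a \<in> D"
    then obtain i where i: "i \<in> T a" "\<forall>w\<in>D. i \<in> T w \<longrightarrow> T w = T a" using assms(2) by blast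
    moreover obtain h where "h \<in> H" "i \<in> T h" using H by (auto simp: covers_def)
    ultimately show "\<exists>h\<in>H. T h = T a" using assms(3) by blast
  qed
next
  assume meets: "\<forall>a\<in>D. \<exists>h\<in>H. T h = T a"
  show "covers T H" unfolding covers_def
  proof
    fix i
    obtain a where "a \<in> D" "i \<in> T a" using assms(1) by (auto simp: covers_def)
    then show "\<exists>h\<in>H. i \<in> T h" using meets by metis
  qed
qed

lemma minimal_cover_iff_transversal_fibres:
  assumes D: "covers T D" and excl: "\<forall>a\<in>D. \<exists>i\<in>T a. \<forall>w\<in>D. i \<in> T w \<longrightarrow> T w = T a"
    and G: "G \<subseteq> D"
  shows "minimal_cover T G \<longleftrightarrow> transversal (fibres D T) G"
proof
  assume mc: "minimal_cover T G"
  show "transversal (fibres D T) G"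
    unfolding transversal_iff_singleton
  proof
    fix B assume "B \<in> fibres D T"
    then obtain a where a: "a \<in> D" "B = {x\<in>D. T x = T a}" by (auto simp: fibres_def)
    have "covers T G" using mc by (simp add: minimal_cover_def)
    then obtain g where g: "g \<in> G" "T g = T a"
      using covers_iff_meets_all_fibres[OF D excl G] a(1) by blast
    have "y = g" if "y \<in> G \<inter> B" for y
      using that a(2) g(2) by (intro minimal_cover_subsumed[OF mc g(1)]) auto
    then have "G \<inter> B \<subseteq> {g}" by blast
    moreover have "g \<in> G \<inter> B" using a(2) g G by auto
    ultimately have "G \<inter> B = {g}" by (auto dest: subset_singletonD)
    then show "\<exists>x. G \<inter> B = {x}" ..
  qed
next
  assume tr: "transversal (fibres D T) G"
  have unique: "\<exists>x. G \<inter> {w\<in>D. T w = T a} = {x}" if "a \<in> D" for a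
    using tr fibre_in_fibres[OF that] unfolding transversal_iff_singleton by (rule bspec)
  have meets: "\<forall>a\<in>D. \<exists>g\<in>G. T g = T a"
  proof
    fix a assume "a \<in> D"
    obtain x where "G \<inter> {w\<in>D. T w = T a} = {x}" using unique[OF \<open>a \<in> D\<close>] by (elim exE)
    then have "x \<in> G \<inter> {w\<in>D. T w = T a}" by simp
    then show "\<exists>g\<in>G. T g = T a" by blast
  qed
  have "\<not> covers T (G - {v})" if v: "v \<in> G" for v
  proof
    assume "covers T (G - {v})"
    moreover have "v \<in> D" using v G by blast
    ultimately obtain g where g: "g \<in> G" "g \<noteq> v" "T g = T v"
      using covers_iff_meets_all_fibres[OF D excl, of "G - {v}"] G by blast
    obtain x where "G \<inter> {w\<in>D. T w = T v} = {x}" using unique[OF \<open>v \<in> D\<close>] by (elim exE)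
    moreover have "g \<in> G \<inter> {w\<in>D. T w = T v}" "v \<in> G \<inter> {w\<in>D. T w = T v}"
      using g v G by auto
    ultimately show False using g(2) by simp
  qed
  then show "minimal_cover T G"
    using meets covers_iff_meets_all_fibres[OF D excl G] by (simp add: minimal_cover_def)
qed

section \<open>Generating sets and characteristic points\<close>

lemma join_eq_iff:
  assumes "finite G" "G \<noteq> {}"
  shows "join G = p \<longleftrightarrow> (\<forall>g\<in>G. dom_le g p) \<and> covers (Tset p) G"
  using assms by (auto simp: vec_eq_iff join_def Max_eq_iff dom_le_def covers_def Tset_def)

lemma gen_set_iff:
  assumes "finite V"
  shows "gen_set V p G \<longleftrightarrow> G \<subseteq> Dset V p \<and> covers (Tset p) G"
proof (cases "G \<subseteq> V \<and> G \<noteq> {}")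
  case True
  then have "finite G" using assms finite_subset by blast
  with True show ?thesis by (auto simp: gen_set_def join_eq_iff Dset_def)
next
  case False
  then show ?thesis by (auto simp: gen_set_def Dset_def covers_def)
qed

lemma min_gen_set_iff:
  assumes "finite V"
  shows "min_gen_set V p G \<longleftrightarrow> G \<subseteq> Dset V p \<and> minimal_cover (Tset p) G"
proof -
  have "min_gen_set V p G \<longleftrightarrow> gen_set V p G \<and> (\<forall>v\<in>G. \<not> gen_set V p (G - {v}))"
    unfolding min_gen_set_def gen_set_def by blast
  then show ?thesis unfolding gen_set_iff[OF assms] minimal_cover_def by blast
qed

lemma Tset_nonempty:
  assumes "p \<in> surface V" "w \<in> Dset V p"
  shows "Tset p w \<noteq> {}"
proof
  assume empty: "Tset p w = {}"
  have "w$i < p$i" for i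
  proof -
    have "i \<notin> Tset p w" using empty by simp
    then have "p$i \<noteq> w$i" by (simp add: Tset_def)
    moreover have "w$i \<le> p$i" using assms(2) by (simp add: Dset_def dom_le_def)
    ultimately show ?thesis by linarith
  qed
  then have "sdom p w" by (simp add: sdom_def)
  then show False using assms unfolding surface_def Dset_def by blast
qed

lemma antichain_finite: "antichain V \<Longrightarrow> finite V"
  by (simp add: antichain_def)

lemma finite_Dset: "finite V \<Longrightarrow> finite (Dset V p)"
  by (simp add: Dset_def)

lemma covers_Dset:
  assumes "finite V" "generated_point V p"
  shows "covers (Tset p) (Dset V p)"
proof -
  obtain G where "gen_set V p G" using assms(2) by (auto simp: generated_point_def)
  then have "G \<subseteq> Dset V p" "covers (Tset p) G" using gen_set_iff[OF assms(1)] by auto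
  then show ?thesis unfolding covers_def by blast
qed

lemma closure_Uflat_subset: "closure (Uflat V i w) \<subseteq> {q. dom_le w q \<and> q$i = w$i}"
proof (rule closure_minimal)
  have "dom_le w q \<and> q$i = w$i" if "sdom_i i q w" for q
    using that unfolding sdom_i_def dom_le_def by (metis less_eq_real_def)
  then show "Uflat V i w \<subseteq> {q. dom_le w q \<and> q$i = w$i}"
    by (auto simp: Uflat_def)
  show "closed {q. dom_le w q \<and> q$i = w$i}"
    unfolding dom_le_def
    by (intro closed_Collect_conj closed_Collect_all closed_Collect_le closed_Collect_eq continuous_intros)
qed

(* Near p, points of U_i(w) lie strictly above any u \<in> D_p with i \<notin> T_p(u) \<subseteq> T_p(w):
   off T_p(u) by openness, on T_p(u) \<subseteq> T_p(w) - {i} by definition of U_i(w). *)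
lemma anchored_if_in_closure_Uflat:
  fixes V :: "(real^'d) set"
  assumes w: "w \<in> V" and p: "p \<in> closure (Uflat V i w)"
  shows "w \<in> Dset V p" "i \<in> Tset p w" "\<forall>u\<in>Dset V p. Tset p u \<subseteq> Tset p w \<longrightarrow> i \<in> Tset p u"
proof -
  show "w \<in> Dset V p" "i \<in> Tset p w"
    using w closure_Uflat_subset p by (auto simp: Dset_def Tset_def)
  show "\<forall>u\<in>Dset V p. Tset p u \<subseteq> Tset p w \<longrightarrow> i \<in> Tset p u"
  proof (intro ballI impI, rule ccontr)
    fix u assume u: "u \<in> Dset V p" and sub: "Tset p u \<subseteq> Tset p w" and iu: "i \<notin> Tset p u"
    define N where "N = (\<Inter>j\<in>- Tset p u. {q::real^'d. u$j < q$j})"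
    have "open N" unfolding N_def
      by (intro open_INT) (auto simp: open_halfspace_component_gt_cart)
    moreover have "p \<in> N" using u by (auto simp: N_def Dset_def dom_le_def Tset_def less_le)
    ultimately obtain q where q: "q \<in> N" "q \<in> Uflat V i w"
      using p open_Int_closure_eq_empty by blast
    have "sdom q u"
      unfolding sdom_def
    proof
      fix j
      show "u$j < q$j"
      proof (cases "j \<in> Tset p u")
        case True
        then have "j \<noteq> i" "j \<in> Tset p w" using iu sub by auto
        then show ?thesis using q(2) True by (auto simp: Uflat_def sdom_i_def Tset_def)
      qed (use q(1) N_def in auto)
    qed
    then show False using q(2) u by (auto simp: Uflat_def surface_def Dset_def)
  qed
qed

lemma perturbation_in_Uflat:
  fixes V :: "(real^'d) set"
  assumes v: "v \<in> Dset V p" and i: "i \<in> Tset p v"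
    and anchor: "\<forall>w\<in>Dset V p. Tset p w \<subseteq> Tset p v \<longrightarrow> i \<in> Tset p w"
    and pos: "0 < \<eta>" and below: "\<forall>j. j \<notin> Tset p v \<longrightarrow> \<eta> < p$j - v$j"
    and above: "\<forall>w\<in>V. \<forall>l. p$l < w$l \<longrightarrow> \<eta> < w$l - p$l"
  shows "p + \<eta> *\<^sub>R (\<chi> j. if j = i then 0 else if j \<in> Tset p v then 1 else -1) \<in> Uflat V i v"
    (is "?q \<in> _")
proof -
  have q: "?q $ j = p$j + \<eta> * (if j = i then 0 else if j \<in> Tset p v then 1 else -1)" for j
    by simp
  have "sdom_i i ?q v"
    using i pos below unfolding sdom_i_def q by (auto simp: Tset_def)
  then have "dom_le v ?q" by (auto simp: sdom_i_def dom_le_def less_imp_le)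
  moreover have "\<not> sdom ?q w" if w: "w \<in> V" for w
  proof
    assume sw: "sdom ?q w"
    show False
    proof (cases "\<exists>l. p$l < w$l")
      case True
      then obtain l where "p$l < w$l" by blast
      then have "\<eta> < w$l - p$l" using above w by blast
      moreover have "?q$l \<le> p$l + \<eta>" using pos by simp
      moreover have "w$l < ?q$l" using sw unfolding sdom_def by blast
      ultimately show False by linarith
    next
      case False
      have "w$i < ?q$i" using sw unfolding sdom_def by blast
      then have "i \<notin> Tset p w" by (simp add: Tset_def)
      moreover have "w \<in> Dset V p" using w False by (simp add: Dset_def dom_le_def not_less)
      ultimately obtain j where j: "j \<in> Tset p w" "j \<notin> Tset p v" using anchor by blast
      then have "j \<noteq> i" using i by blast
      then have "?q$j = p$j - \<eta>" using j(2) by simp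
      moreover have "w$j < ?q$j" using sw unfolding sdom_def by blast
      ultimately show False using j(1) pos by (simp add: Tset_def)
    qed
  qed
  ultimately show ?thesis using v \<open>sdom_i i ?q v\<close> by (auto simp: Uflat_def surface_def Dset_def)
qed

lemma in_closure_Uflat_if_anchored:
  fixes V :: "(real^'d) set"
  assumes fin: "finite V" and v: "v \<in> Dset V p" and i: "i \<in> Tset p v"
    and anchor: "\<forall>w\<in>Dset V p. Tset p w \<subseteq> Tset p v \<longrightarrow> i \<in> Tset p w"
  shows "p \<in> closure (Uflat V i v)"
proof -
  define s :: "real^'d" where "s = (\<chi> j. if j = i then 0 else if j \<in> Tset p v then 1 else -1)"
  have small: "\<forall>\<^sub>F \<eta> in at_right 0. \<eta> < c" if "0 < c" for c :: real
    using eventually_at_right_real[OF that] by eventually_elim simp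
  have "\<forall>\<^sub>F \<eta> in at_right 0. \<forall>j. j \<notin> Tset p v \<longrightarrow> \<eta> < p$j - v$j"
  proof (rule eventually_all_finite)
    fix j
    show "\<forall>\<^sub>F \<eta> in at_right 0. j \<notin> Tset p v \<longrightarrow> \<eta> < p$j - v$j"
      using small[of "p$j - v$j"] v by (cases "j \<in> Tset p v") (auto simp: Dset_def dom_le_def Tset_def less_le)
  qed
  moreover have "\<forall>\<^sub>F \<eta> in at_right 0. \<forall>w\<in>V. \<forall>l. p$l < w$l \<longrightarrow> \<eta> < w$l - p$l"
  proof (intro eventually_ball_finite[OF fin] ballI eventually_all_finite)
    fix w l
    show "\<forall>\<^sub>F \<eta> in at_right 0. p$l < w$l \<longrightarrow> \<eta> < w$l - p$l"
      using small[of "w$l - p$l"] by (cases "p$l < w$l") auto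
  qed
  ultimately have "\<forall>\<^sub>F \<eta> in at_right 0. p + \<eta> *\<^sub>R s \<in> Uflat V i v"
    using eventually_at_right_less[of 0] unfolding s_def
    by eventually_elim (blast intro: perturbation_in_Uflat[OF v i anchor])
  then have "\<forall>\<^sub>F \<eta> in at_right 0. p + \<eta> *\<^sub>R s \<in> closure (Uflat V i v)"
    by eventually_elim (rule closure_subset[THEN subsetD])
  moreover have "((\<lambda>\<eta>. p + \<eta> *\<^sub>R s) \<longlongrightarrow> p + 0 *\<^sub>R s) (at_right 0)"
    by (intro tendsto_intros)
  ultimately show ?thesis by (intro Lim_in_closed_set[of _ "\<lambda>\<eta>. p + \<eta> *\<^sub>R s"]) auto
qed

lemma in_closure_Uflat_iff:
  fixes V :: "(real^'d) set"
  assumes "finite V" "w \<in> V"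
  shows "p \<in> closure (Uflat V i w) \<longleftrightarrow>
    w \<in> Dset V p \<and> i \<in> Tset p w \<and> (\<forall>u\<in>Dset V p. Tset p u \<subseteq> Tset p w \<longrightarrow> i \<in> Tset p u)"
  using anchored_if_in_closure_Uflat[OF assms(2)] in_closure_Uflat_if_anchored[OF assms(1)] by blast

lemma characteristic_iff_closure_Uflat:
  fixes V :: "(real^'d) set"
  assumes fin: "finite V"
  shows "characteristic V p \<longleftrightarrow> p \<in> surface V \<and> (\<forall>i. \<exists>v\<in>V. p \<in> closure (Uflat V i v))"
proof -
  have "(\<exists>v\<in>V. p \<in> flat V i v) \<longleftrightarrow> (\<exists>v\<in>V. p \<in> closure (Uflat V i v))" for i
  proof
    assume "\<exists>v\<in>V. p \<in> flat V i v"
    then obtain v where v: "v \<in> V" "p \<in> flat V i v" by blast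
    define W where "W = {w. (sim_i V i)\<^sup>*\<^sup>* v w}"
    have W: "W \<subseteq> V"
    proof
      fix w assume "w \<in> W"
      then have "(sim_i V i)\<^sup>*\<^sup>* v w" by (simp add: W_def)
      then show "w \<in> V"
        by (induction rule: rtranclp_induct) (use v(1) in \<open>auto simp: sim_i_def\<close>)
    qed
    then have "finite W" using fin by (rule finite_subset)
    then have "closed (\<Union>w\<in>W. closure (Uflat V i w))" by blast
    then have "flat V i v \<subseteq> (\<Union>w\<in>W. closure (Uflat V i w))"
      unfolding flat_def W_def by (rule closure_minimal[rotated]) (use closure_subset in blast)
    then show "\<exists>v\<in>V. p \<in> closure (Uflat V i v)" using v(2) W by blast
  next
    assume "\<exists>v\<in>V. p \<in> closure (Uflat V i v)"
    moreover have "closure (Uflat V i v) \<subseteq> flat V i v" for v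
      unfolding flat_def by (rule closure_mono) blast
    ultimately show "\<exists>v\<in>V. p \<in> flat V i v" by blast
  qed
  then show ?thesis by (simp add: characteristic_def)
qed

lemma characteristic_iff:
  fixes V :: "(real^'d) set"
  assumes "finite V"
  shows "characteristic V p \<longleftrightarrow> p \<in> surface V \<and>
    (\<forall>i. \<exists>v\<in>Dset V p. i \<in> Tset p v \<and> (\<forall>w\<in>Dset V p. Tset p w \<subseteq> Tset p v \<longrightarrow> i \<in> Tset p w))"
  using assms by (auto simp: characteristic_iff_closure_Uflat in_closure_Uflat_iff Dset_def)

section \<open>Partitions of the minima below p\<close>

lemma Tset_chain_if_nondegenerate:
  assumes nd: "\<not> degenerate V" and ch: "characteristic V p"
    and x: "x \<in> Dset V p" and u: "u \<in> Dset V p" and v: "v \<in> Dset V p"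
  shows "Tset p x \<inter> Tset p v \<subseteq> Tset p u \<or> Tset p x \<inter> Tset p u \<subseteq> Tset p v"
proof (rule ccontr)
  assume "\<not> ?thesis"
  then obtain i j where i: "i \<in> Tset p x" "i \<in> Tset p v" "i \<notin> Tset p u"
    and j: "j \<in> Tset p x" "j \<in> Tset p u" "j \<notin> Tset p v" by blast
  have "u$i \<le> p$i" "v$j \<le> p$j" using u v by (simp_all add: Dset_def dom_le_def)
  then have "u$i < v$i \<and> v$i = x$i \<and> x$i = p$i \<and> v$j < u$j \<and> u$j = x$j \<and> x$j = p$j"
    using i j by (auto simp: Tset_def)
  moreover have "i \<noteq> j" using i j by blast
  ultimately have "degenerate V"
    unfolding degenerate_def using ch x u v
    by (intro exI[of _ p] exI[of _ x] exI[of _ u] exI[of _ v] exI[of _ i] exI[of _ j]) blast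
  then show False using nd by contradiction
qed

definition min_gen_partition :: "(real^'d) set \<Rightarrow> real^'d \<Rightarrow> (real^'d) set set \<Rightarrow> bool" where
  "min_gen_partition V p \<P> \<longleftrightarrow> partition_on (Dset V p) \<P> \<and>
     (\<forall>G\<subseteq>Dset V p. min_gen_set V p G \<longleftrightarrow> transversal \<P> G)"

lemma characteristic_if_min_gen_partition:
  assumes fin: "finite V" and p: "p \<in> surface V" and P: "min_gen_partition V p \<P>"
  shows "characteristic V p"
proof -
  have part: "partition_on (Dset V p) \<P>" using P by (simp add: min_gen_partition_def)
  have "\<forall>G\<subseteq>Dset V p. minimal_cover (Tset p) G \<longleftrightarrow> transversal \<P> G"
    using P by (simp add: min_gen_partition_def min_gen_set_iff[OF fin])
  from anchored_if_minimal_covers_transversal[OF finite_Dset[OF fin] part this]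
  show ?thesis using p by (simp add: characteristic_iff[OF fin])
qed

lemma min_gen_set_iff_transversal_fibres:
  assumes ac: "antichain V" and nd: "\<not> degenerate V" and gp: "generated_point V p"
    and ch: "characteristic V p" and G: "G \<subseteq> Dset V p"
  shows "min_gen_set V p G \<longleftrightarrow> transversal (fibres (Dset V p) (Tset p)) G"
proof -
  have fin: "finite V" using antichain_finite[OF ac] .
  have p: "p \<in> surface V" using gp by (simp add: generated_point_def)
  have "\<forall>i. \<exists>v\<in>Dset V p. i \<in> Tset p v \<and> (\<forall>w\<in>Dset V p. Tset p w \<subseteq> Tset p v \<longrightarrow> i \<in> Tset p w)"
    using ch by (simp add: characteristic_iff[OF fin])
  from private_coordinate[OF finite_Dset[OF fin] Tset_nonempty[OF p] this[rule_format]
      Tset_chain_if_nondegenerate[OF nd ch]]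
  have "\<forall>a\<in>Dset V p. \<exists>i\<in>Tset p a. \<forall>w\<in>Dset V p. i \<in> Tset p w \<longrightarrow> Tset p w = Tset p a" by blast
  then show ?thesis
    using minimal_cover_iff_transversal_fibres[OF covers_Dset[OF fin gp] _ G]
    by (simp add: min_gen_set_iff[OF fin] G)
qed

lemma min_gen_partition_iff:
  assumes ac: "antichain V" and nd: "\<not> degenerate V" and gp: "generated_point V p"
  shows "min_gen_partition V p \<P> \<longleftrightarrow> characteristic V p \<and> \<P> = fibres (Dset V p) (Tset p)"
proof
  assume P: "min_gen_partition V p \<P>"
  have ch: "characteristic V p"
    using gp by (intro characteristic_if_min_gen_partition[OF antichain_finite[OF ac] _ P])
      (simp add: generated_point_def)
  have part: "partition_on (Dset V p) \<P>" using P by (simp add: min_gen_partition_def)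
  have "\<forall>G\<subseteq>Dset V p. transversal \<P> G \<longleftrightarrow> transversal (fibres (Dset V p) (Tset p)) G"
    using P min_gen_set_iff_transversal_fibres[OF ac nd gp ch] by (simp add: min_gen_partition_def)
  then have "\<P> = fibres (Dset V p) (Tset p)"
    by (rule partitions_eq_if_same_transversals[OF part partition_on_fibres])
  with ch show "characteristic V p \<and> \<P> = fibres (Dset V p) (Tset p)" ..
next
  assume "characteristic V p \<and> \<P> = fibres (Dset V p) (Tset p)"
  then show "min_gen_partition V p \<P>"
    using min_gen_set_iff_transversal_fibres[OF ac nd gp]
    by (simp add: min_gen_partition_def partition_on_fibres)
qed

lemma rank_eq_card_min_gen_partition:
  assumes fin: "finite V" and P: "min_gen_partition V p \<P>"
  shows "rank V p = card \<P> - 1"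
proof -
  define S where "S = (SOME G. min_gen_set V p G)"
  have part: "partition_on (Dset V p) \<P>"
    and mg: "\<forall>G\<subseteq>Dset V p. min_gen_set V p G \<longleftrightarrow> transversal \<P> G"
    using P by (simp_all add: min_gen_partition_def)
  obtain G where "G \<subseteq> Dset V p" "transversal \<P> G" using transversal_exists[OF part] .
  then have "min_gen_set V p G" using mg by blast
  then have "min_gen_set V p S" unfolding S_def by (rule someI)
  moreover from this have S: "S \<subseteq> Dset V p" using min_gen_set_iff[OF fin] by blast
  ultimately have "transversal \<P> S" using mg by blast
  with S have "card S = card \<P>" by (rule card_transversal[OF finite_Dset[OF fin] part])
  then show ?thesis by (simp add: rank_def S_def)
qed

lemma indexed_min_gen_partition_iff:
  "(\<forall>i\<le>k. P i \<noteq> {}) \<and> (\<forall>i\<le>k. \<forall>j\<le>k. i \<noteq> j \<longrightarrow> P i \<inter> P j = {}) \<and>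
   (\<Union>i\<le>k. P i) = Dset V p \<and>
   (\<forall>G. G \<subseteq> Dset V p \<longrightarrow> (min_gen_set V p G \<longleftrightarrow> (\<forall>i\<le>k. card (G \<inter> P i) = 1)))
   \<longleftrightarrow> min_gen_partition V p (P ` {..k}) \<and> inj_on P {..k}"
  (is "?nonempty \<and> ?disjoint \<and> ?covering \<and> ?transversals \<longleftrightarrow> _")
proof -
  have transversals: "?transversals \<longleftrightarrow>
      (\<forall>G\<subseteq>Dset V p. min_gen_set V p G \<longleftrightarrow> transversal (P ` {..k}) G)"
    by (simp add: transversal_def) (simp add: Ball_def)
  have "?nonempty \<and> ?disjoint \<and> ?covering \<and> ?transversals \<longleftrightarrow>
      (?nonempty \<and> ?disjoint \<and> ?covering) \<and> ?transversals"
    by (simp only: conj_assoc)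
  also have "\<dots> \<longleftrightarrow> (partition_on (Dset V p) (P ` {..k}) \<and> inj_on P {..k}) \<and>
      (\<forall>G\<subseteq>Dset V p. min_gen_set V p G \<longleftrightarrow> transversal (P ` {..k}) G)"
    by (simp only: indexed_partition_iff transversals)
  also have "\<dots> \<longleftrightarrow> min_gen_partition V p (P ` {..k}) \<and> inj_on P {..k}"
    unfolding min_gen_partition_def by (simp only: conj_ac)
  finally show ?thesis .
qed

lemma characteristic_rank_iff:
  assumes ac: "antichain V" and nd: "\<not> degenerate V" and gp: "generated_point V p"
  shows "characteristic V p \<and> rank V p = k \<longleftrightarrow> (\<exists>P. min_gen_partition V p (P ` {..k}) \<and> inj_on P {..k})"
proof
  note fin = antichain_finite[OF ac]
  define \<Q> where "\<Q> = fibres (Dset V p) (Tset p)"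
  assume "characteristic V p \<and> rank V p = k"
  then have Q: "min_gen_partition V p \<Q>" and rank: "rank V p = k"
    by (simp_all add: min_gen_partition_iff[OF ac nd gp] \<Q>_def)
  have fin_Q: "finite \<Q>"
    unfolding \<Q>_def by (rule finite_elements[OF finite_Dset[OF fin] partition_on_fibres])
  have "Dset V p \<noteq> {}" using gp by (auto simp: generated_point_def surface_def Dset_def)
  then have "\<Q> \<noteq> {}" by (simp add: \<Q>_def fibres_def)
  then have "card \<Q> > 0" using fin_Q by (simp add: card_gt_0_iff)
  then have "card \<Q> = Suc k" using rank rank_eq_card_min_gen_partition[OF fin Q] by linarith
  then obtain P where "P ` {..k} = \<Q>" "inj_on P {..k}" by (rule enumerate_finite_set[OF fin_Q])
  with Q show "\<exists>P. min_gen_partition V p (P ` {..k}) \<and> inj_on P {..k}" by blast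
next
  note fin = antichain_finite[OF ac]
  assume "\<exists>P. min_gen_partition V p (P ` {..k}) \<and> inj_on P {..k}"
  then obtain P where P: "min_gen_partition V p (P ` {..k})" "inj_on P {..k}" by blast
  then have "rank V p = k" by (simp add: rank_eq_card_min_gen_partition[OF fin] card_image)
  with P(1) show "characteristic V p \<and> rank V p = k" by (simp add: min_gen_partition_iff[OF ac nd gp])
qed

lemma same_block_iff_Tset_eq:
  assumes ac: "antichain V" and nd: "\<not> degenerate V" and gp: "generated_point V p"
    and P: "min_gen_partition V p (P ` {..k})" and u: "u \<in> Dset V p" and w: "w \<in> Dset V p"
  shows "(\<exists>i\<le>k. u \<in> P i \<and> w \<in> P i) \<longleftrightarrow> Tset p u = Tset p w"
proof -
  have "(\<exists>i\<le>k. u \<in> P i \<and> w \<in> P i) \<longleftrightarrow> (\<exists>B\<in>P ` {..k}. u \<in> B \<and> w \<in> B)" by blast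
  also have "\<dots> \<longleftrightarrow> (\<exists>B\<in>fibres (Dset V p) (Tset p). u \<in> B \<and> w \<in> B)"
    using P by (simp add: min_gen_partition_iff[OF ac nd gp])
  also have "\<dots> \<longleftrightarrow> Tset p u = Tset p w" using u w by (rule same_fibre_iff)
  finally show ?thesis .
qed

theorem corollary4p8:
  fixes V :: "(real^'d) set" and p :: "real^'d" and k :: nat
  assumes "antichain V" and "\<not> degenerate V" and "generated_point V p"
  shows "((characteristic V p \<and> rank V p = k) \<longleftrightarrow>
           (\<exists>P :: nat \<Rightarrow> (real^'d) set.
              (\<forall>i\<le>k. P i \<noteq> {}) \<and>
              (\<forall>i\<le>k. \<forall>j\<le>k. i \<noteq> j \<longrightarrow> P i \<inter> P j = {}) \<and>
              (\<Union>i\<le>k. P i) = Dset V p \<and>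
              (\<forall>G. G \<subseteq> Dset V p \<longrightarrow>
                   (min_gen_set V p G \<longleftrightarrow> (\<forall>i\<le>k. card (G \<inter> P i) = 1))))) \<and>
         (\<forall>P :: nat \<Rightarrow> (real^'d) set.
              ((\<forall>i\<le>k. P i \<noteq> {}) \<and>
               (\<forall>i\<le>k. \<forall>j\<le>k. i \<noteq> j \<longrightarrow> P i \<inter> P j = {}) \<and>
               (\<Union>i\<le>k. P i) = Dset V p \<and>
               (\<forall>G. G \<subseteq> Dset V p \<longrightarrow>
                   (min_gen_set V p G \<longleftrightarrow> (\<forall>i\<le>k. card (G \<inter> P i) = 1))))
           \<longrightarrow> (\<forall>u\<in>Dset V p. \<forall>w\<in>Dset V p.
                  (\<exists>i\<le>k. u \<in> P i \<and> w \<in> P i) \<longleftrightarrow> Tset p u = Tset p w))"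
  unfolding indexed_min_gen_partition_iff
  using characteristic_rank_iff[OF assms] same_block_iff_Tset_eq[OF assms] by blast

end
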